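(* Let $v=(x,y,w,s,z)$, let $\bar\sigma\in(0,\tfrac12)$, $\alpha\in(0,\tfrac{\pi}{2}]$, $\beta\in(0,\tfrac12]$ and $\sigma\in(\bar\sigma,1)$, and let $\mu=z^Ts/p$. Let $\dot v$ be a solution of $F'(v)\dot v=F(v)-\sigma\mu\bar e$, let $\ddot v$ be any vector of the same dimension, and $v(\alpha)=v-\dot v\sin(\alpha)+\ddot v(1-\cos(\alpha))$. Set $D=2F(v)^TF'(v)\dot v$. If $$\phi(v(\alpha))\le\phi(v)-\beta\sin(\alpha)\,D,$$ then $$\phi(v(\alpha))\le\phi(v)\big(1-2\beta(1-\sigma)\sin(\alpha)\big)<\phi(v).$$
   Context: Let $f:\mathbb{R}^n\to\mathbb{R}$, $h:\mathbb{R}^n\to\mathbb{R}^m$, $g:\mathbb{R}^n\to\mathbb{R}^p$ ($m<n$, $p\ge1$) be twice differentiable. Variables $v=(x,y,w,s,z)\in\mathbb{R}^n\times\mathbb{R}^m\times\mathbb{R}^p\times\mathbb{R}^p\times\mathbb{R}^p$. With $\nabla h(x)=[\nabla h_1(x),\dots,\nabla h_m(x)]$, $\nabla g(x)=[\nabla g_1(x),\dots,\nabla g_p(x)]$, let $\nabla_xL(v)=\nabla f(x)+\nabla h(x)y-\nabla g(x)w$ and $\nabla_x^2L(v)$ its Jacobian in $x$. $\mathcal{D}(u)$ is the diagonal matrix with diagonal $u$, $e$ the all-ones vector, $\bar e=(0,0,0,0,e)$. $F(v)=(\nabla_xL(v),h(x),g(x)-s,w-z,\mathcal{D}(z)s)$,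 $\phi(v)=\|F(v)\|_2^2$, and $$F'(v)=\begin{bmatrix}\nabla_x^2L(v)&\nabla h(x)&-\nabla g(x)&0&0\\ \nabla h(x)^T&0&0&0&0\\ \nabla g(x)^T&0&0&-I&0\\ 0&0&I&0&-I\\ 0&0&0&\mathcal{D}(z)&\mathcal{D}(s)\end{bmatrix}.$$ *)

theory Defs
  imports "HOL-Analysis.Analysis"
begin

type_synonym ('n,'m,'p) pdvar =
  "(real^'n) \<times> (real^'m) \<times> (real^'p) \<times> (real^'p) \<times> (real^'p)"

definition grad :: "(real^'n \<Rightarrow> real) \<Rightarrow> real^'n \<Rightarrow> real^'n" where
  "grad f x = (\<chi> i. frechet_derivative f (at x) (axis i 1))"

text \<open>The matrix nabla h(x) = [grad h_1(x), ..., grad h_m(x)] (n x m) is the transpose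
  of the Jacobian of h.\<close>
definition gradM :: "(real^'n \<Rightarrow> real^'m) \<Rightarrow> real^'n \<Rightarrow> real^'m^'n" where
  "gradM h x = transpose (jacobian h (at x))"

definition gradL ::
  "(real^'n \<Rightarrow> real) \<Rightarrow> (real^'n \<Rightarrow> real^'m) \<Rightarrow> (real^'n \<Rightarrow> real^'p)
   \<Rightarrow> real^'n \<Rightarrow> real^'m \<Rightarrow> real^'p \<Rightarrow> real^'n" where
  "gradL f h g x y w = grad f x + gradM h x *v y - gradM g x *v w"

definition hessL ::
  "(real^'n \<Rightarrow> real) \<Rightarrow> (real^'n \<Rightarrow> real^'m) \<Rightarrow> (real^'n \<Rightarrow> real^'p)
   \<Rightarrow> real^'n \<Rightarrow> real^'m \<Rightarrow> real^'p \<Rightarrow> real^'n^'n" where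
  "hessL f h g x y w = jacobian (\<lambda>x'. gradL f h g x' y w) (at x)"

definition diagm :: "real^'p \<Rightarrow> real^'p^'p" where
  "diagm u = (\<chi> i j. if i = j then u $ i else 0)"

definition Fmap ::
  "(real^'n \<Rightarrow> real) \<Rightarrow> (real^'n \<Rightarrow> real^'m) \<Rightarrow> (real^'n \<Rightarrow> real^'p)
   \<Rightarrow> ('n,'m,'p) pdvar \<Rightarrow> ('n,'m,'p) pdvar" where
  "Fmap f h g v = (case v of (x,y,w,s,z) \<Rightarrow>
     (gradL f h g x y w, h x, g x - s, w - z, diagm z *v s))"

definition phi ::
  "(real^'n \<Rightarrow> real) \<Rightarrow> (real^'n \<Rightarrow> real^'m) \<Rightarrow> (real^'n \<Rightarrow> real^'p)
   \<Rightarrow> ('n,'m,'p) pdvar \<Rightarrow> real" where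
  "phi f h g v = (norm (Fmap f h g v))\<^sup>2"

definition Fderiv ::
  "(real^'n \<Rightarrow> real) \<Rightarrow> (real^'n \<Rightarrow> real^'m) \<Rightarrow> (real^'n \<Rightarrow> real^'p)
   \<Rightarrow> ('n,'m,'p) pdvar \<Rightarrow> ('n,'m,'p) pdvar \<Rightarrow> ('n,'m,'p) pdvar" where
  "Fderiv f h g v d = (case v of (x,y,w,s,z) \<Rightarrow> case d of (dx,dy,dw,ds,dz) \<Rightarrow>
     (hessL f h g x y w *v dx + gradM h x *v dy - gradM g x *v dw,
      transpose (gradM h x) *v dx,
      transpose (gradM g x) *v dx - ds,
      dw - dz,
      diagm z *v ds + diagm s *v dz))"

definition ebar :: "('n::finite,'m::finite,'p::finite) pdvar" where
  "ebar = (0, 0, 0, 0, (\<chi> i. 1))"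

definition mu :: "('n::finite,'m::finite,'p::finite) pdvar \<Rightarrow> real" where
  "mu v = (case v of (x,y,w,s,z) \<Rightarrow> (z \<bullet> s) / real CARD('p))"

end

theory Submission
  imports Defs
begin

text \<open>Along the perturbed Newton direction, F(v)'F'(v) vd = phi(v) - sigma mu (F(v)'ebar), and
  F(v)'ebar = z's = p mu. By Cauchy-Schwarz against the all-ones vector, p mu^2 = (e'Zs)^2/p is at
  most |Zs|^2, hence at most phi(v). So the directional term D is at least 2(1 - sigma) phi(v),
  and the Armijo condition turns into the claimed linear decrease.\<close>

lemma inner_ones_diagm_mult_vec: "(diagm z *v s) \<bullet> (\<chi> i. 1) = z \<bullet> s"
  unfolding diagm_def inner_vec_def matrix_vector_mult_def
  by (simp add: if_distrib[where f="\<lambda>a. a * b" for b] cong: if_cong)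

lemma norm_ones_squared: "(norm (\<chi> i. 1 :: real^'p))\<^sup>2 = real CARD('p)"
  by (simp add: power2_norm_eq_inner inner_vec_def)

lemma inner_ones_squared_le: "(u \<bullet> (\<chi> i. 1))\<^sup>2 \<le> real CARD('p) * (norm (u :: real^'p))\<^sup>2"
proof -
  have "\<bar>u \<bullet> (\<chi> i. 1)\<bar>\<^sup>2 \<le> (norm u * norm (\<chi> i. 1 :: real^'p))\<^sup>2"
    by (intro power_mono Cauchy_Schwarz_ineq2) simp
  then show ?thesis
    by (simp add: power_mult_distrib norm_ones_squared mult.commute)
qed

lemma inner_Fmap_ebar:
  fixes v :: "('n::finite,'m::finite,'p::finite) pdvar"
  shows "Fmap f h g v \<bullet> ebar = real CARD('p) * mu v"
  by (cases v) (simp add: Fmap_def ebar_def mu_def inner_ones_diagm_mult_vec)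

lemma card_mult_mu_squared_le_phi:
  fixes v :: "('n::finite,'m::finite,'p::finite) pdvar"
  shows "real CARD('p) * (mu v)\<^sup>2 \<le> phi f h g v"
proof -
  obtain x y w s z where v: "v = (x, y, w, s, z)" by (cases v) auto
  let ?u = "diagm z *v s"
  have "real CARD('p) * (mu v)\<^sup>2 = (?u \<bullet> (\<chi> i. 1))\<^sup>2 / real CARD('p)"
    by (simp add: mu_def v inner_ones_diagm_mult_vec power_divide power2_eq_square)
  also have "\<dots> \<le> (norm ?u)\<^sup>2"
    using inner_ones_squared_le[of ?u] by (simp add: divide_le_eq mult.commute)
  also have "\<dots> \<le> phi f h g v"
    by (simp add: phi_def Fmap_def v norm_Pair)
  finally show ?thesis .
qed

lemma inner_Fmap_Fderiv_newton_ge: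
  fixes v vd :: "('n::finite,'m::finite,'p::finite) pdvar"
  assumes newton: "Fderiv f h g v vd = Fmap f h g v - (\<sigma> * mu v) *\<^sub>R ebar"
    and "0 \<le> \<sigma>"
  shows "(1 - \<sigma>) * phi f h g v \<le> Fmap f h g v \<bullet> Fderiv f h g v vd"
proof -
  have "Fmap f h g v \<bullet> Fderiv f h g v vd = phi f h g v - \<sigma> * (real CARD('p) * (mu v)\<^sup>2)"
    by (simp add: newton inner_diff_right inner_Fmap_ebar phi_def power2_norm_eq_inner
        power2_eq_square[of "mu v"])
  moreover have "\<sigma> * (real CARD('p) * (mu v)\<^sup>2) \<le> \<sigma> * phi f h g v"
    using card_mult_mu_squared_le_phi \<open>0 \<le> \<sigma>\<close> by (rule mult_left_mono)
  ultimately show ?thesis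
    by (simp add: algebra_simps)
qed

theorem lemma2:
  fixes f :: "real^'n \<Rightarrow> real" and h :: "real^'n \<Rightarrow> real^'m" and g :: "real^'n \<Rightarrow> real^'p"
    and v vd vdd :: "('n,'m,'p) pdvar"
    and sigmabar \<alpha> \<beta> \<sigma> :: real
  assumes mn: "CARD('m) < CARD('n)"
    and f2: "\<forall>x. f differentiable (at x) \<and> (\<lambda>x'. grad f x') differentiable (at x)"
    and h2: "\<forall>x. h differentiable (at x) \<and> (\<lambda>x'. jacobian h (at x')) differentiable (at x)"
    and g2: "\<forall>x. g differentiable (at x) \<and> (\<lambda>x'. jacobian g (at x')) differentiable (at x)"
    and sb: "0 < sigmabar" "sigmabar < 1/2"
    and al: "0 < \<alpha>" "\<alpha> \<le> pi/2"
    and be: "0 < \<beta>" "\<beta> \<le> 1/2"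
    and si: "sigmabar < \<sigma>" "\<sigma> < 1"
    and nontriv: "phi f h g v > 0"
    and newton: "Fderiv f h g v vd = Fmap f h g v - (\<sigma> * mu v) *\<^sub>R ebar"
    and armijo: "phi f h g (v - sin \<alpha> *\<^sub>R vd + (1 - cos \<alpha>) *\<^sub>R vdd)
                   \<le> phi f h g v - \<beta> * sin \<alpha> * (2 * (Fmap f h g v \<bullet> Fderiv f h g v vd))"
  shows "phi f h g (v - sin \<alpha> *\<^sub>R vd + (1 - cos \<alpha>) *\<^sub>R vdd)
           \<le> phi f h g v * (1 - 2 * \<beta> * (1 - \<sigma>) * sin \<alpha>)
         \<and> phi f h g v * (1 - 2 * \<beta> * (1 - \<sigma>) * sin \<alpha>) < phi f h g v"
proof -
  have descent: "(1 - \<sigma>) * phi f h g v \<le> Fmap f h g v \<bullet> Fderiv f h g v vd"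
    using newton sb si by (intro inner_Fmap_Fderiv_newton_ge) auto
  have "sin \<alpha> > 0"
    using al pi_half_less_two by (intro sin_gt_zero) auto
  then have step_pos: "\<beta> * sin \<alpha> > 0"
    using be by simp
  have "\<beta> * sin \<alpha> * (2 * ((1 - \<sigma>) * phi f h g v))
          \<le> \<beta> * sin \<alpha> * (2 * (Fmap f h g v \<bullet> Fderiv f h g v vd))"
    using descent step_pos by (intro mult_left_mono) auto
  moreover have "0 < \<beta> * sin \<alpha> * (1 - \<sigma>) * phi f h g v"
    using step_pos si nontriv by simp
  ultimately show ?thesis
    using armijo by (simp add: algebra_simps)
qed

end
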